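(* Let $a(z,\check w)\in\mathrm{End}(V)\{z,\check w\}$ (a distribution not depending on $\bar z$) be OPE-finite, and let $\check h_1,\dots,\check h_r$ be the pole orders of its reduced OPE. If all $\check h_i$ lie in $\check{\mathbb K}$, then $r\le1$, and if $r=1$ then $\check h_1\in\mathbb Z\times\{0\}$.
   Context: $\mathbb K$ of characteristic $0$. $\check z=(z,\bar z)$, $\check w=(w,\bar w)$. A field is an $\mathrm{End}(V)$-valued formal distribution (exponents in $\mathbb K$) whose value on each vector is a vertex series (finite sum of monomials times power series). $(\check z-\check w)^{\check h}=\sum_{\check i\in\mathbb N^2}(-1)^{i+\bar i}\binom hi\binom{\bar h}{\bar i}z^{h-i}\bar z^{\bar h-\bar i}w^i\bar w^{\bar i}$ for $\check h\in\mathbb K^2$. An OPE of $A(\check z,\check w)$ is $A=\sum_i(\check z-\check w)^{-\check h_i}c^i(\check z,\check w)$ with fields $c^i$ ($A$ viewed as a distribution in $\check z,\check w$); OPE-finite means an OPE exists. The OPE is reduced if $\check h_i-\check h_j\notin\mathbb Z^2$ for $i\ne j$ and no $(\check z-\check w)^{-\check n}c^i$ with $\check n\in\mathbb N^2\setminus\{0\}$ is a field; the reduced OPE is unique and its exponents $\check h_i$ are the pole orders. $\check{\mathbb K}=\{\check h\in\mathbb K^2:h-\bar h\in\mathbb Z\}$. *)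

theory Defs
  imports Complex_Main
begin

text \<open>
  An End(V)-valued formal distribution in the variables z, zbar, w, wbar with exponents
  in K is a map D from exponent quadruples (e1,e2,e3,e4) to End(V); D (e1,e2,e3,e4) is
  the coefficient of the monomial z^e1 zbar^e2 w^e3 wbar^e4.
\<close>

type_synonym ('k, 'v) dist = "'k \<times> 'k \<times> 'k \<times> 'k \<Rightarrow> 'v \<Rightarrow> 'v"

definition end_dist :: "('k::field_char_0 \<Rightarrow> 'v::ab_group_add \<Rightarrow> 'v) \<Rightarrow> ('k, 'v) dist \<Rightarrow> bool" where
  "end_dist scale D \<longleftrightarrow> (\<forall>e. Vector_Spaces.linear scale scale (D e))"

definition power_series4 :: "('k::field_char_0 \<times> 'k \<times> 'k \<times> 'k \<Rightarrow> 'v::zero) \<Rightarrow> bool" where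
  "power_series4 P \<longleftrightarrow> (\<forall>e1 e2 e3 e4. P (e1,e2,e3,e4) \<noteq> 0 \<longrightarrow>
      e1 \<in> \<nat> \<and> e2 \<in> \<nat> \<and> e3 \<in> \<nat> \<and> e4 \<in> \<nat>)"

text \<open>Vertex series: a finite sum of monomials times power series.\<close>
definition vertex_series4 :: "('k::field_char_0 \<times> 'k \<times> 'k \<times> 'k \<Rightarrow> 'v::comm_monoid_add) \<Rightarrow> bool" where
  "vertex_series4 f \<longleftrightarrow> (\<exists>S P. finite S \<and> (\<forall>s\<in>S. power_series4 (P s)) \<and>
      (\<forall>e1 e2 e3 e4. f (e1,e2,e3,e4) =
         (\<Sum>(s1,s2,s3,s4)\<in>S. P (s1,s2,s3,s4) (e1 - s1, e2 - s2, e3 - s3, e4 - s4))))"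

definition is_field :: "('k::field_char_0 \<Rightarrow> 'v::ab_group_add \<Rightarrow> 'v) \<Rightarrow> ('k, 'v) dist \<Rightarrow> bool" where
  "is_field scale D \<longleftrightarrow> end_dist scale D \<and> (\<forall>v. vertex_series4 (\<lambda>e. D e v))"

text \<open>Multiplication of a distribution c by
  (zc - wc)^(h,hb) = sum_{i,ib} (-1)^(i+ib) (h choose i) (hb choose ib) z^(h-i) zbar^(hb-ib) w^i wbar^ib.
  The coefficient at (e1,e2,e3,e4) applied to v is the sum over all (i,ib) in N^2 of the
  corresponding terms; this sum is finite (on fields, which is the only case where it is used),
  and we sum over the (finite) set of indices where the term of c is nonzero.\<close>
definition mult_pow :: "('k::field_char_0 \<Rightarrow> 'v::ab_group_add \<Rightarrow> 'v) \<Rightarrow> 'k \<Rightarrow> 'k \<Rightarrow> ('k, 'v) dist \<Rightarrow> ('k, 'v) dist" where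
  "mult_pow scale h hb c = (\<lambda>(e1, e2, e3, e4). \<lambda>v.
     \<Sum>p\<in>{p :: nat \<times> nat. c (e1 - h + of_nat (fst p), e2 - hb + of_nat (snd p), e3 - of_nat (fst p), e4 - of_nat (snd p)) v \<noteq> 0}.
       scale ((-1) ^ (fst p + snd p) * (h gchoose (fst p)) * (hb gchoose (snd p)))
             (c (e1 - h + of_nat (fst p), e2 - hb + of_nat (snd p), e3 - of_nat (fst p), e4 - of_nat (snd p)) v))"

text \<open>An OPE of A with r terms, pole orders hs i = (h_i, hb_i) and fields cs i:
  A = sum_i (zc - wc)^(-hs i) cs i.\<close>
definition is_ope :: "('k::field_char_0 \<Rightarrow> 'v::ab_group_add \<Rightarrow> 'v) \<Rightarrow> ('k, 'v) dist \<Rightarrow> nat \<Rightarrow> (nat \<Rightarrow> 'k \<times> 'k) \<Rightarrow> (nat \<Rightarrow> ('k, 'v) dist) \<Rightarrow> bool" where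
  "is_ope scale A r hs cs \<longleftrightarrow>
     (\<forall>i<r. is_field scale (cs i)) \<and>
     (\<forall>e v. A e v = (\<Sum>i<r. mult_pow scale (- fst (hs i)) (- snd (hs i)) (cs i) e v))"

definition ope_finite :: "('k::field_char_0 \<Rightarrow> 'v::ab_group_add \<Rightarrow> 'v) \<Rightarrow> ('k, 'v) dist \<Rightarrow> bool" where
  "ope_finite scale A \<longleftrightarrow> (\<exists>r hs cs. is_ope scale A r hs cs)"

definition reduced_ope :: "('k::field_char_0 \<Rightarrow> 'v::ab_group_add \<Rightarrow> 'v) \<Rightarrow> ('k, 'v) dist \<Rightarrow> nat \<Rightarrow> (nat \<Rightarrow> 'k \<times> 'k) \<Rightarrow> (nat \<Rightarrow> ('k, 'v) dist) \<Rightarrow> bool" where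
  "reduced_ope scale A r hs cs \<longleftrightarrow>
     is_ope scale A r hs cs \<and>
     (\<forall>i<r. cs i \<noteq> (\<lambda>e v. 0)) \<and>
     (\<forall>i<r. \<forall>j<r. i \<noteq> j \<longrightarrow>
        \<not> (fst (hs i) - fst (hs j) \<in> \<int> \<and> snd (hs i) - snd (hs j) \<in> \<int>)) \<and>
     (\<forall>i<r. \<forall>n nb :: nat. (n, nb) \<noteq> (0, 0) \<longrightarrow>
        \<not> is_field scale (mult_pow scale (- of_nat n) (- of_nat nb) (cs i)))"

definition Kcheck :: "('k::field_char_0 \<times> 'k) set" where
  "Kcheck = {(h, hb). h - hb \<in> \<int>}"

definition indep_zbar :: "('k::field_char_0, 'v::zero) dist \<Rightarrow> bool" where
  "indep_zbar A \<longleftrightarrow> (\<forall>e1 e2 e3 e4 v. e2 \<noteq> 0 \<longrightarrow> A (e1, e2, e3, e4) v = 0)"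

end

theory Submission
  imports Defs
begin

(* Write a = sum_i (z - w)^(-h_i) (zb - wb)^(-hb_i) c_i and H_i = (z - w)^(-h_i) c_i, so that
   a = sum_i (zb - wb)^(-hb_i) H_i.  Since a does not depend on zbar, restricting to an antidiagonal
   of (zbar, wbar)-exponents turns this into an identity sum_i (1 - x)^(-hb_i) Q_i(x) = polynomial,
   with polynomials Q_i.  The series (1 - x)^(-beta) are eigenvectors of (1 - x) d/dx, so for
   pairwise incongruent beta mod Z they are independent modulo polynomials; hence H_i = 0, and then
   c_i = 0, whenever hb_i is not an integer.  So reducedness forces every hb_i into Z, and since
   h_i - hb_i is in Z as well, it leaves at most one term.  For that term hb < 0 would give H = 0
   (a polynomial in zb - wb cannot cancel all zbar-dependence), while hb > 0 would make
   (zb - wb)^(-hb) c a field, contradicting reducedness; so hb = 0 and h is an integer. *)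

section \<open>Integer and natural exponents\<close>

lemma finite_Nats_minus_of_nat: "finite {k::nat. (a::'k::field_char_0) - of_nat k \<in> \<nat>}"
proof (cases "a \<in> \<nat>")
  case True
  then obtain n where n: "a = of_nat n" by (auto elim: Nats_cases)
  have "{k. a - of_nat k \<in> \<nat>} \<subseteq> {..n}"
  proof
    fix k assume "k \<in> {k. a - of_nat k \<in> \<nat>}"
    then obtain m where "a - of_nat k = of_nat m" by (auto elim: Nats_cases)
    then have "n = m + k" using n by (simp add: algebra_simps flip: of_nat_add)
    then show "k \<in> {..n}" by simp
  qed
  then show ?thesis by (rule finite_subset) simp
next
  case False
  have "a - of_nat k \<notin> \<nat>" for k
    using False Nats_add[of "a - of_nat k" "of_nat k"] by auto
  then show ?thesis by simp
qed

lemma Nats_minus_of_nat_bounded: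
  fixes A :: "'k::field_char_0 set"
  assumes "finite A"
  obtains D :: nat where "\<And>a k. a \<in> A \<Longrightarrow> a - of_nat k \<in> \<nat> \<Longrightarrow> k < D"
proof -
  have "finite (\<Union>a\<in>A. {k::nat. a - of_nat k \<in> \<nat>})"
    using assms finite_Nats_minus_of_nat by blast
  then show ?thesis using that unfolding finite_nat_set_iff_bounded by blast
qed

lemma finite_int_window:
  fixes \<alpha> \<beta> :: "'k::field_char_0"
  shows "finite {k::int. \<alpha> + of_int k \<in> \<nat> \<and> \<beta> - of_int k \<in> \<nat>}" (is "finite ?K")
proof (cases "?K = {}")
  case False
  then obtain k0 n0 n0' where n0: "\<alpha> + of_int k0 = of_nat n0" "\<beta> - of_int k0 = of_nat n0'"
    by (auto elim!: Nats_cases)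
  have "?K \<subseteq> {k0 - int n0 .. k0 + int n0'}"
  proof
    fix k assume "k \<in> ?K"
    then obtain n n' where n: "\<alpha> + of_int k = of_nat n" "\<beta> - of_int k = of_nat n'"
      by (auto elim!: Nats_cases)
    have "(of_int (k - k0) :: 'k) = (\<alpha> + of_int k) - (\<alpha> + of_int k0)" by simp
    then have "(of_int (k - k0) :: 'k) = of_int (int n - int n0)" unfolding n n0 by simp
    moreover have "(of_int (k0 - k) :: 'k) = (\<beta> - of_int k) - (\<beta> - of_int k0)" by simp
    then have "(of_int (k0 - k) :: 'k) = of_int (int n' - int n0')" unfolding n n0 by simp
    ultimately show "k \<in> {k0 - int n0 .. k0 + int n0'}"
      unfolding of_int_eq_iff by simp
  qed
  then show ?thesis by (rule finite_subset) simp
qed (metis finite.emptyI)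

section \<open>Supports bounded below\<close>

definition supp_above ::
    "('k::field_char_0 \<times> 'k \<times> 'k \<times> 'k \<Rightarrow> 'v::zero) \<Rightarrow> ('k \<times> 'k \<times> 'k \<times> 'k) set \<Rightarrow> bool" where
  "supp_above f S \<longleftrightarrow> (\<forall>e1 e2 e3 e4. f (e1,e2,e3,e4) \<noteq> 0 \<longrightarrow>
     (\<exists>s1 s2 s3 s4. (s1,s2,s3,s4) \<in> S \<and>
        e1 - s1 \<in> \<nat> \<and> e2 - s2 \<in> \<nat> \<and> e3 - s3 \<in> \<nat> \<and> e4 - s4 \<in> \<nat>))"

lemma vertex_series4_iff_supp_above:
  fixes f :: "'k::field_char_0 \<times> 'k \<times> 'k \<times> 'k \<Rightarrow> 'v::comm_monoid_add"
  shows "vertex_series4 f \<longleftrightarrow> (\<exists>S. finite S \<and> supp_above f S)"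
proof
  assume "vertex_series4 f"
  then obtain S P where S: "finite S" "\<forall>s\<in>S. power_series4 (P s)"
    and f: "\<And>e1 e2 e3 e4. f (e1,e2,e3,e4) =
         (\<Sum>(s1,s2,s3,s4)\<in>S. P (s1,s2,s3,s4) (e1 - s1, e2 - s2, e3 - s3, e4 - s4))"
    unfolding vertex_series4_def by blast
  have "supp_above f S"
    unfolding supp_above_def
  proof (intro allI impI)
    fix e1 e2 e3 e4 assume "f (e1,e2,e3,e4) \<noteq> 0"
    then obtain s where "s \<in> S"
      and "(case s of (s1,s2,s3,s4) \<Rightarrow> P (s1,s2,s3,s4) (e1 - s1, e2 - s2, e3 - s3, e4 - s4)) \<noteq> 0"
      unfolding f by (rule sum.not_neutral_contains_not_neutral)
    then show "\<exists>s1 s2 s3 s4. (s1,s2,s3,s4) \<in> S \<and>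
        e1 - s1 \<in> \<nat> \<and> e2 - s2 \<in> \<nat> \<and> e3 - s3 \<in> \<nat> \<and> e4 - s4 \<in> \<nat>"
      using S(2) unfolding power_series4_def by (cases s) fastforce
  qed
  with S(1) show "\<exists>S. finite S \<and> supp_above f S" by blast
next
  assume "\<exists>S. finite S \<and> supp_above f S"
  then obtain S where fin: "finite S" and supp: "supp_above f S" by blast
  define above :: "'k \<times> 'k \<times> 'k \<times> 'k \<Rightarrow> 'k \<times> 'k \<times> 'k \<times> 'k \<Rightarrow> bool"
    where "above = (\<lambda>(s1,s2,s3,s4) (e1,e2,e3,e4).
      e1 - s1 \<in> \<nat> \<and> e2 - s2 \<in> \<nat> \<and> e3 - s3 \<in> \<nat> \<and> e4 - s4 \<in> \<nat>)"
  \<comment> \<open>Each nonzero coefficient is assigned to one chosen corner of S below it.\<close>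
  define corner where "corner = (\<lambda>e. SOME s. s \<in> S \<and> above s e)"
  define P where "P = (\<lambda>(s1,s2,s3,s4) (x1,x2,x3,x4). let e = (x1 + s1, x2 + s2, x3 + s3, x4 + s4) in
      if above (s1,s2,s3,s4) e \<and> corner e = (s1,s2,s3,s4) then f e else 0)"
  have "power_series4 (P s)" for s
    unfolding power_series4_def P_def above_def by (cases s) (auto simp: Let_def split: if_splits)
  moreover have "f (e1,e2,e3,e4) =
      (\<Sum>(s1,s2,s3,s4)\<in>S. P (s1,s2,s3,s4) (e1 - s1, e2 - s2, e3 - s3, e4 - s4))" for e1 e2 e3 e4
  proof -
    let ?e = "(e1,e2,e3,e4)"
    have P: "(case s of (s1,s2,s3,s4) \<Rightarrow> P (s1,s2,s3,s4) (e1 - s1, e2 - s2, e3 - s3, e4 - s4))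
        = (if above s ?e \<and> corner ?e = s then f ?e else 0)" for s
      by (cases s) (simp add: P_def Let_def)
    show ?thesis
    proof (cases "f ?e = 0")
      case False
      then have "\<exists>s. s \<in> S \<and> above s ?e"
        using supp unfolding supp_above_def above_def by fastforce
      then have corner: "corner ?e \<in> S \<and> above (corner ?e) ?e"
        unfolding corner_def by (rule someI_ex)
      then have "(\<Sum>s\<in>S. if above s ?e \<and> corner ?e = s then f ?e else 0)
          = (\<Sum>s\<in>S. if corner ?e = s then f ?e else 0)"
        by (intro sum.cong) auto
      then show ?thesis unfolding P using corner fin by simp
    qed (simp add: P cong: if_cong)
  qed
  ultimately show "vertex_series4 f"
    unfolding vertex_series4_def using fin by blast
qed

definition w_supp_above :: "('k::field_char_0, 'v::zero) dist \<Rightarrow> 'v \<Rightarrow> ('k \<times> 'k) set \<Rightarrow> bool" where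
  "w_supp_above Y v S \<longleftrightarrow> (\<forall>e1 e2 e3 e4. Y (e1,e2,e3,e4) v \<noteq> 0 \<longrightarrow>
     (\<exists>s3 s4. (s3,s4) \<in> S \<and> e3 - s3 \<in> \<nat> \<and> e4 - s4 \<in> \<nat>))"

definition bar_supp_above :: "('k::field_char_0, 'v::zero) dist \<Rightarrow> 'v \<Rightarrow> ('k \<times> 'k) set \<Rightarrow> bool" where
  "bar_supp_above Y v S \<longleftrightarrow> (\<forall>e1 e2 e3 e4. Y (e1,e2,e3,e4) v \<noteq> 0 \<longrightarrow>
     (\<exists>s2 s4. (s2,s4) \<in> S \<and> e2 - s2 \<in> \<nat> \<and> e4 - s4 \<in> \<nat>))"

definition w_bounded :: "('k::field_char_0, 'v::zero) dist \<Rightarrow> bool" where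
  "w_bounded Y \<longleftrightarrow> (\<forall>v. \<exists>S. finite S \<and> w_supp_above Y v S)"

definition bar_bounded :: "('k::field_char_0, 'v::zero) dist \<Rightarrow> bool" where
  "bar_bounded Y \<longleftrightarrow> (\<forall>v. \<exists>S. finite S \<and> bar_supp_above Y v S)"

lemma field_supp_above:
  assumes "is_field scale c"
  obtains S where "finite S" "supp_above (\<lambda>e. c e v) S"
  using assms unfolding is_field_def vertex_series4_iff_supp_above by blast

lemma w_bounded_field:
  assumes "is_field scale c"
  shows "w_bounded c"
  unfolding w_bounded_def
proof
  fix v
  obtain S where "finite S" "supp_above (\<lambda>e. c e v) S"
    using assms by (rule field_supp_above)
  moreover have "w_supp_above c v ((\<lambda>(s1,s2,s3,s4). (s3,s4)) ` S)" if "supp_above (\<lambda>e. c e v) S"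
    using that unfolding supp_above_def w_supp_above_def by (fastforce intro: rev_image_eqI)
  ultimately show "\<exists>S. finite S \<and> w_supp_above c v S" by blast
qed

lemma bar_bounded_field:
  assumes "is_field scale c"
  shows "bar_bounded c"
  unfolding bar_bounded_def
proof
  fix v
  obtain S where "finite S" "supp_above (\<lambda>e. c e v) S"
    using assms by (rule field_supp_above)
  moreover have "bar_supp_above c v ((\<lambda>(s1,s2,s3,s4). (s2,s4)) ` S)" if "supp_above (\<lambda>e. c e v) S"
    using that unfolding supp_above_def bar_supp_above_def by (fastforce intro: rev_image_eqI)
  ultimately show "\<exists>S. finite S \<and> bar_supp_above c v S" by blast
qed

definition w_depth_le :: "('k::field_char_0, 'v::zero) dist \<Rightarrow> 'v \<Rightarrow> 'k \<Rightarrow> 'k \<Rightarrow> nat \<Rightarrow> bool" where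
  "w_depth_le Y v e3 e4 M \<longleftrightarrow>
     (\<forall>e1 e2 p1 p2. Y (e1, e2, e3 - of_nat p1, e4 - of_nat p2) v \<noteq> 0 \<longrightarrow> p1 \<le> M \<and> p2 \<le> M)"

lemma w_bounded_depth:
  assumes "w_bounded Y"
  obtains M where "w_depth_le Y v e3 e4 M"
proof -
  obtain S where S: "finite S" and supp: "w_supp_above Y v S"
    using assms unfolding w_bounded_def by blast
  let ?A = "(\<lambda>(s3,s4). e3 - s3) ` S \<union> (\<lambda>(s3,s4). e4 - s4) ` S"
  have "finite ?A" using S by simp
  then obtain D where D: "\<And>a k. a \<in> ?A \<Longrightarrow> a - of_nat k \<in> \<nat> \<Longrightarrow> k < D"
    by (rule Nats_minus_of_nat_bounded) metis
  have "w_depth_le Y v e3 e4 D"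
    unfolding w_depth_le_def
  proof (intro allI impI)
    fix e1 e2 p1 p2 assume "Y (e1, e2, e3 - of_nat p1, e4 - of_nat p2) v \<noteq> 0"
    then obtain s3 s4 where s: "(s3,s4) \<in> S" "e3 - of_nat p1 - s3 \<in> \<nat>" "e4 - of_nat p2 - s4 \<in> \<nat>"
      using supp unfolding w_supp_above_def by blast
    have "e3 - s3 \<in> ?A" by (rule UnI1, rule rev_image_eqI[OF s(1)]) simp
    moreover have "e4 - s4 \<in> ?A" by (rule UnI2, rule rev_image_eqI[OF s(1)]) simp
    moreover have "(e3 - s3) - of_nat p1 \<in> \<nat>" "(e4 - s4) - of_nat p2 \<in> \<nat>"
      using s(2,3) by (simp_all add: algebra_simps)
    ultimately have "p1 < D" "p2 < D" using D by blast+
    then show "p1 \<le> D \<and> p2 \<le> D" by simp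
  qed
  then show ?thesis by (rule that)
qed

lemma w_depth_leD:
  assumes "w_depth_le Y v e3 e4 M"
  shows "Y (e1, e2, e3 - of_nat p, e4) v \<noteq> 0 \<Longrightarrow> p \<le> M"
    and "Y (e1, e2, e3, e4 - of_nat p) v \<noteq> 0 \<Longrightarrow> p \<le> M"
  using assms unfolding w_depth_le_def by (metis diff_zero of_nat_0)+

lemma w_depth_le_mono: "w_depth_le Y v e3 e4 M \<Longrightarrow> M \<le> M' \<Longrightarrow> w_depth_le Y v e3 e4 M'"
  unfolding w_depth_le_def by (meson order_trans)

lemma w_depth_le_shift:
  assumes "w_depth_le Y v e3 e4 M"
  shows "w_depth_le Y v (e3 - of_nat q1) (e4 - of_nat q2) M"
  unfolding w_depth_le_def
proof (intro allI impI)
  fix e1 e2 p1 p2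
  assume "Y (e1, e2, e3 - of_nat q1 - of_nat p1, e4 - of_nat q2 - of_nat p2) v \<noteq> 0"
  then have "Y (e1, e2, e3 - of_nat (q1 + p1), e4 - of_nat (q2 + p2)) v \<noteq> 0"
    by (simp add: algebra_simps)
  then have "q1 + p1 \<le> M \<and> q2 + p2 \<le> M" using assms unfolding w_depth_le_def by blast
  then show "p1 \<le> M \<and> p2 \<le> M" by simp
qed

section \<open>Multiplication by powers of z - w and zb - wb\<close>

text \<open>In lemma names, holo refers to multiplication by (z - w)^h alone (mult_pow scale h 0) and
  antiholo to multiplication by (zb - wb)^hb alone (mult_pow scale 0 hb).\<close>

locale char0_vector_space = vector_space scale for scale :: "'k::field_char_0 \<Rightarrow> 'v::ab_group_add \<Rightarrow> 'v"
begin

lemma mult_pow_nonzeroE: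
  assumes "mult_pow scale h hb Y (e1,e2,e3,e4) v \<noteq> 0"
  obtains p1 p2 where "Y (e1 - h + of_nat p1, e2 - hb + of_nat p2, e3 - of_nat p1, e4 - of_nat p2) v \<noteq> 0"
    and "h gchoose p1 \<noteq> 0" and "hb gchoose p2 \<noteq> 0"
proof -
  obtain p where "scale ((-1) ^ (fst p + snd p) * (h gchoose fst p) * (hb gchoose snd p))
      (Y (e1 - h + of_nat (fst p), e2 - hb + of_nat (snd p), e3 - of_nat (fst p), e4 - of_nat (snd p)) v) \<noteq> 0"
    using assms unfolding mult_pow_def by (auto elim: sum.not_neutral_contains_not_neutral)
  then show ?thesis using that[of "fst p" "snd p"] by auto
qed

lemma w_bounded_mult_pow:
  assumes "w_bounded Y"
  shows "w_bounded (mult_pow scale h hb Y)"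
  unfolding w_bounded_def
proof
  fix v
  obtain S where S: "finite S" and supp: "w_supp_above Y v S"
    using assms unfolding w_bounded_def by blast
  have "w_supp_above (mult_pow scale h hb Y) v S"
    unfolding w_supp_above_def
  proof (intro allI impI)
    fix e1 e2 e3 e4 assume "mult_pow scale h hb Y (e1,e2,e3,e4) v \<noteq> 0"
    then obtain p1 p2 where "Y (e1 - h + of_nat p1, e2 - hb + of_nat p2, e3 - of_nat p1, e4 - of_nat p2) v \<noteq> 0"
      by (rule mult_pow_nonzeroE)
    then obtain s3 s4 where "(s3,s4) \<in> S" "e3 - of_nat p1 - s3 \<in> \<nat>" "e4 - of_nat p2 - s4 \<in> \<nat>"
      using supp unfolding w_supp_above_def by blast
    moreover have "e3 - s3 = (e3 - of_nat p1 - s3) + of_nat p1" "e4 - s4 = (e4 - of_nat p2 - s4) + of_nat p2"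
      by simp_all
    ultimately show "\<exists>s3 s4. (s3,s4) \<in> S \<and> e3 - s3 \<in> \<nat> \<and> e4 - s4 \<in> \<nat>"
      by (metis Nats_add of_nat_in_Nats)
  qed
  with S show "\<exists>S. finite S \<and> w_supp_above (mult_pow scale h hb Y) v S" by blast
qed

lemma bar_bounded_mult_pow_holo:
  assumes "bar_bounded Y"
  shows "bar_bounded (mult_pow scale h 0 Y)"
  unfolding bar_bounded_def
proof
  fix v
  obtain S where S: "finite S" and supp: "bar_supp_above Y v S"
    using assms unfolding bar_bounded_def by blast
  have "bar_supp_above (mult_pow scale h 0 Y) v S"
    unfolding bar_supp_above_def
  proof (intro allI impI)
    fix e1 e2 e3 e4 assume "mult_pow scale h 0 Y (e1,e2,e3,e4) v \<noteq> 0"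
    then obtain p1 p2 where "Y (e1 - h + of_nat p1, e2 - 0 + of_nat p2, e3 - of_nat p1, e4 - of_nat p2) v \<noteq> 0"
      and "(0::'k) gchoose p2 \<noteq> 0"
      by (rule mult_pow_nonzeroE)
    then show "\<exists>s2 s4. (s2,s4) \<in> S \<and> e2 - s2 \<in> \<nat> \<and> e4 - s4 \<in> \<nat>"
      using supp unfolding bar_supp_above_def by (simp add: gbinomial_0_left split: if_splits)
  qed
  with S show "\<exists>S. finite S \<and> bar_supp_above (mult_pow scale h 0 Y) v S" by blast
qed

lemma w_depth_le_mult_pow:
  assumes "w_depth_le Y v e3 e4 M"
  shows "w_depth_le (mult_pow scale h hb Y) v e3 e4 M"
  unfolding w_depth_le_def
proof (intro allI impI)
  fix e1 e2 p1 p2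
  assume "mult_pow scale h hb Y (e1, e2, e3 - of_nat p1, e4 - of_nat p2) v \<noteq> 0"
  then obtain q1 q2 where
    "Y (e1 - h + of_nat q1, e2 - hb + of_nat q2, e3 - of_nat p1 - of_nat q1, e4 - of_nat p2 - of_nat q2) v \<noteq> 0"
    by (rule mult_pow_nonzeroE)
  then have "Y (e1 - h + of_nat q1, e2 - hb + of_nat q2, e3 - of_nat (p1 + q1), e4 - of_nat (p2 + q2)) v \<noteq> 0"
    by (simp add: algebra_simps)
  then have "p1 + q1 \<le> M \<and> p2 + q2 \<le> M" using assms unfolding w_depth_le_def by blast
  then show "p1 \<le> M \<and> p2 \<le> M" by simp
qed

text \<open>mult_pow sums over the set of nonzero terms, and a sum over an infinite set is 0 in HOL;
  a depth bound makes that set finite, so that mult_pow is the honest finite sum.\<close>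

lemma mult_pow_window_sum:
  assumes "w_depth_le Y v e3 e4 M"
  shows "mult_pow scale h hb Y (e1,e2,e3,e4) v =
    (\<Sum>p1\<le>M. \<Sum>p2\<le>M. scale ((-1) ^ (p1 + p2) * (h gchoose p1) * (hb gchoose p2))
       (Y (e1 - h + of_nat p1, e2 - hb + of_nat p2, e3 - of_nat p1, e4 - of_nat p2) v))"
proof -
  let ?t = "\<lambda>(p1, p2). scale ((-1) ^ (p1 + p2) * (h gchoose p1) * (hb gchoose p2))
             (Y (e1 - h + of_nat p1, e2 - hb + of_nat p2, e3 - of_nat p1, e4 - of_nat p2) v)"
  have "mult_pow scale h hb Y (e1,e2,e3,e4) v = sum ?t
      {p. Y (e1 - h + of_nat (fst p), e2 - hb + of_nat (snd p), e3 - of_nat (fst p), e4 - of_nat (snd p)) v \<noteq> 0}"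
    by (simp add: mult_pow_def case_prod_beta)
  also have "\<dots> = sum ?t ({..M} \<times> {..M})"
    using assms unfolding w_depth_le_def by (intro sum.mono_neutral_left) (auto simp del: of_nat_add)
  finally show ?thesis by (simp add: sum.cartesian_product)
qed

lemma mult_pow_holo_window_sum:
  assumes "w_depth_le Y v e3 e4 M"
  shows "mult_pow scale h 0 Y (e1,e2,e3,e4) v =
    (\<Sum>p\<le>M. scale ((-1) ^ p * (h gchoose p)) (Y (e1 - h + of_nat p, e2, e3 - of_nat p, e4) v))"
proof -
  have "(-1) ^ (p1 + p2) * (h gchoose p1) * (0 gchoose p2) =
      (if p2 = 0 then (-1) ^ p1 * (h gchoose p1) else 0)" for p1 p2
    by (simp add: gbinomial_0_left)
  moreover have "scale (if b then c else 0) x = (if b then scale c x else 0)" for b c x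
    by simp
  ultimately show ?thesis unfolding mult_pow_window_sum[OF assms] by (simp cong: if_cong)
qed

lemma mult_pow_antiholo_window_sum:
  assumes "w_depth_le Y v e3 e4 M"
  shows "mult_pow scale 0 hb Y (e1,e2,e3,e4) v =
    (\<Sum>p\<le>M. scale ((-1) ^ p * (hb gchoose p)) (Y (e1, e2 - hb + of_nat p, e3, e4 - of_nat p) v))"
proof -
  have "(-1) ^ (p1 + p2) * (0 gchoose p1) * (hb gchoose p2) =
      (if p1 = 0 then (-1) ^ p2 * (hb gchoose p2) else 0)" for p1 p2
    by (simp add: gbinomial_0_left)
  moreover have "scale (if b then c else 0) x = (if b then scale c x else 0)" for b c x
    by simp
  ultimately show ?thesis unfolding mult_pow_window_sum[OF assms]
    by (subst sum.swap) (simp cong: if_cong)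
qed

lemma mult_pow_eq_antiholo_holo:
  assumes "w_bounded c"
  shows "mult_pow scale h hb c = mult_pow scale 0 hb (mult_pow scale h 0 c)"
proof (intro ext)
  fix e :: "'k \<times> 'k \<times> 'k \<times> 'k" and v
  obtain e1 e2 e3 e4 where e: "e = (e1,e2,e3,e4)" by (cases e)
  obtain M where M: "w_depth_le c v e3 e4 M" using assms by (rule w_bounded_depth)
  have "mult_pow scale 0 hb (mult_pow scale h 0 c) (e1,e2,e3,e4) v =
     (\<Sum>p2\<le>M. scale ((-1) ^ p2 * (hb gchoose p2)) (mult_pow scale h 0 c (e1, e2 - hb + of_nat p2, e3, e4 - of_nat p2) v))"
    by (rule mult_pow_antiholo_window_sum[OF w_depth_le_mult_pow[OF M]])
  also have "\<dots> = (\<Sum>p2\<le>M. scale ((-1) ^ p2 * (hb gchoose p2))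
      (\<Sum>p1\<le>M. scale ((-1) ^ p1 * (h gchoose p1))
        (c (e1 - h + of_nat p1, e2 - hb + of_nat p2, e3 - of_nat p1, e4 - of_nat p2) v)))"
    by (intro sum.cong refl arg_cong[where f="scale _"] mult_pow_holo_window_sum
        w_depth_le_shift[OF M, of 0, simplified])
  also have "\<dots> = (\<Sum>p2\<le>M. \<Sum>p1\<le>M. scale ((-1) ^ (p1 + p2) * (h gchoose p1) * (hb gchoose p2))
      (c (e1 - h + of_nat p1, e2 - hb + of_nat p2, e3 - of_nat p1, e4 - of_nat p2) v))"
    by (simp add: scale_sum_right power_add mult_ac)
  also have "\<dots> = mult_pow scale h hb c (e1,e2,e3,e4) v"
    unfolding mult_pow_window_sum[OF M] by (rule sum.swap)
  finally show "mult_pow scale h hb c e v = mult_pow scale 0 hb (mult_pow scale h 0 c) e v"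
    unfolding e by simp
qed

lemma mult_pow_eq_holo_antiholo:
  assumes "w_bounded c"
  shows "mult_pow scale h hb c = mult_pow scale h 0 (mult_pow scale 0 hb c)"
proof (intro ext)
  fix e :: "'k \<times> 'k \<times> 'k \<times> 'k" and v
  obtain e1 e2 e3 e4 where e: "e = (e1,e2,e3,e4)" by (cases e)
  obtain M where M: "w_depth_le c v e3 e4 M" using assms by (rule w_bounded_depth)
  have "mult_pow scale h 0 (mult_pow scale 0 hb c) (e1,e2,e3,e4) v =
     (\<Sum>p1\<le>M. scale ((-1) ^ p1 * (h gchoose p1)) (mult_pow scale 0 hb c (e1 - h + of_nat p1, e2, e3 - of_nat p1, e4) v))"
    by (rule mult_pow_holo_window_sum[OF w_depth_le_mult_pow[OF M]])
  also have "\<dots> = (\<Sum>p1\<le>M. scale ((-1) ^ p1 * (h gchoose p1))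
      (\<Sum>p2\<le>M. scale ((-1) ^ p2 * (hb gchoose p2))
        (c (e1 - h + of_nat p1, e2 - hb + of_nat p2, e3 - of_nat p1, e4 - of_nat p2) v)))"
    by (intro sum.cong refl arg_cong[where f="scale _"] mult_pow_antiholo_window_sum
        w_depth_le_shift[OF M, of _ 0, simplified])
  also have "\<dots> = mult_pow scale h hb c (e1,e2,e3,e4) v"
    unfolding mult_pow_window_sum[OF M] by (simp add: scale_sum_right power_add mult_ac)
  finally show "mult_pow scale h hb c e v = mult_pow scale h 0 (mult_pow scale 0 hb c) e v"
    unfolding e by simp
qed

lemma end_dist_mult_pow:
  assumes "end_dist scale c" and "w_bounded c"
  shows "end_dist scale (mult_pow scale h hb c)"
  unfolding end_dist_def
proof
  fix e :: "'k \<times> 'k \<times> 'k \<times> 'k"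
  obtain e1 e2 e3 e4 where e: "e = (e1,e2,e3,e4)" by (cases e)
  have lin: "c e (x + y) = c e x + c e y" "c e (scale a x) = scale a (c e x)" for e x y a
    using assms(1) unfolding end_dist_def Vector_Spaces.linear_iff by blast+
  have depth: "\<exists>M. w_depth_le c x e3 e4 M \<and> w_depth_le c y e3 e4 M \<and> w_depth_le c z e3 e4 M" for x y z
  proof -
    obtain Mx My Mz where "w_depth_le c x e3 e4 Mx" "w_depth_le c y e3 e4 My" "w_depth_le c z e3 e4 Mz"
      using w_bounded_depth[OF assms(2)] by metis
    then show ?thesis by (meson w_depth_le_mono max.cobounded1 max.cobounded2 order_trans)
  qed
  have "mult_pow scale h hb c e (x + y) = mult_pow scale h hb c e x + mult_pow scale h hb c e y" for x y
  proof -
    obtain M where "w_depth_le c x e3 e4 M" "w_depth_le c y e3 e4 M" "w_depth_le c (x + y) e3 e4 M"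
      using depth by blast
    then show ?thesis
      unfolding e by (simp add: mult_pow_window_sum lin scale_right_distrib sum.distrib)
  qed
  moreover have "mult_pow scale h hb c e (scale a x) = scale a (mult_pow scale h hb c e x)" for a x
  proof -
    obtain M where "w_depth_le c x e3 e4 M" "w_depth_le c (scale a x) e3 e4 M"
      using depth by blast
    then show ?thesis
      unfolding e by (simp add: mult_pow_window_sum lin scale_sum_right mult.commute)
  qed
  ultimately show "Vector_Spaces.linear scale scale (mult_pow scale h hb c e)"
    unfolding Vector_Spaces.linear_iff using vector_space_axioms by blast
qed

lemma field_mult_pow_antiholo:
  assumes field: "is_field scale c" and indep: "indep_zbar (mult_pow scale 0 hb c)"
  shows "is_field scale (mult_pow scale 0 hb c)"
  unfolding is_field_def
proof (intro conjI allI)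
  show "end_dist scale (mult_pow scale 0 hb c)"
    using field w_bounded_field[OF field] end_dist_mult_pow unfolding is_field_def by blast
  fix v
  obtain S where S: "finite S" and supp: "supp_above (\<lambda>e. c e v) S"
    using field by (rule field_supp_above)
  let ?S = "(\<lambda>(s1,s2,s3,s4). (s1,0::'k,s3,s4)) ` S"
  have "supp_above (\<lambda>e. mult_pow scale 0 hb c e v) ?S"
    unfolding supp_above_def
  proof (intro allI impI)
    fix e1 e2 e3 e4 assume nz: "mult_pow scale 0 hb c (e1,e2,e3,e4) v \<noteq> 0"
    then have e2: "e2 = 0" using indep unfolding indep_zbar_def by blast
    obtain p1 p2 where "c (e1 - 0 + of_nat p1, e2 - hb + of_nat p2, e3 - of_nat p1, e4 - of_nat p2) v \<noteq> 0"
      and "(0::'k) gchoose p1 \<noteq> 0"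
      using nz by (rule mult_pow_nonzeroE)
    then have "c (e1, e2 - hb + of_nat p2, e3, e4 - of_nat p2) v \<noteq> 0"
      by (simp add: gbinomial_0_left split: if_splits)
    then obtain s1 s2 s3 s4 where s: "(s1,s2,s3,s4) \<in> S" "e1 - s1 \<in> \<nat>" "e3 - s3 \<in> \<nat>" "e4 - of_nat p2 - s4 \<in> \<nat>"
      using supp unfolding supp_above_def by blast
    have "e4 - s4 = (e4 - of_nat p2 - s4) + of_nat p2" by simp
    then have "e4 - s4 \<in> \<nat>" using s(4) by (metis Nats_add of_nat_in_Nats)
    moreover have "(s1,0,s3,s4) \<in> ?S" using s(1) by (rule rev_image_eqI) simp
    ultimately show "\<exists>s1 s2 s3 s4. (s1,s2,s3,s4) \<in> ?S \<and>
        e1 - s1 \<in> \<nat> \<and> e2 - s2 \<in> \<nat> \<and> e3 - s3 \<in> \<nat> \<and> e4 - s4 \<in> \<nat>"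
      using s e2 by (intro exI[of _ s1] exI[of _ "0::'k"] exI[of _ s3] exI[of _ s4]) simp
  qed
  then show "vertex_series4 (\<lambda>e. mult_pow scale 0 hb c e v)"
    unfolding vertex_series4_iff_supp_above using S by blast
qed

lemma mult_pow_holo_top:
  assumes depth: "w_depth_le Y v f3 f4 M"
    and top: "\<And>j. 0 < j \<Longrightarrow> Y (f1 + of_nat j, f2, f3 - of_nat j, f4) v = 0"
  shows "mult_pow scale h 0 Y (f1 + h, f2, f3, f4) v = Y (f1, f2, f3, f4) v"
proof -
  have "mult_pow scale h 0 Y (f1 + h, f2, f3, f4) v =
      (\<Sum>p\<le>M. scale ((-1) ^ p * (h gchoose p)) (Y (f1 + h - h + of_nat p, f2, f3 - of_nat p, f4) v))"
    by (rule mult_pow_holo_window_sum[OF depth])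
  also have "\<dots> = (\<Sum>p\<le>M. if p = 0 then Y (f1, f2, f3, f4) v else 0)"
    by (rule sum.cong) (simp_all add: top)
  finally show ?thesis by simp
qed

lemma mult_pow_antiholo_top:
  assumes depth: "w_depth_le Y v f3 f4 M"
    and top: "\<And>k. 0 < k \<Longrightarrow> Y (f1, f2 + of_nat k, f3, f4 - of_nat k) v = 0"
  shows "mult_pow scale 0 \<beta> Y (f1, f2 + \<beta>, f3, f4) v = Y (f1, f2, f3, f4) v"
proof -
  have "mult_pow scale 0 \<beta> Y (f1, f2 + \<beta>, f3, f4) v =
      (\<Sum>p\<le>M. scale ((-1) ^ p * (\<beta> gchoose p)) (Y (f1, f2 + \<beta> - \<beta> + of_nat p, f3, f4 - of_nat p) v))"
    by (rule mult_pow_antiholo_window_sum[OF depth])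
  also have "\<dots> = (\<Sum>p\<le>M. if p = 0 then Y (f1, f2, f3, f4) v else 0)"
    by (rule sum.cong) (simp_all add: top)
  finally show ?thesis by simp
qed

lemma mult_pow_antiholo_bottom:
  assumes depth: "w_depth_le Y v f3 (f4 + of_nat m) M"
    and bottom: "\<And>k. 0 < k \<Longrightarrow> Y (f1, f2 - of_nat k, f3, f4 + of_nat k) v = 0"
  shows "mult_pow scale 0 (of_nat m) Y (f1, f2, f3, f4 + of_nat m) v
    = scale ((-1) ^ m) (Y (f1, f2, f3, f4) v)"
proof -
  have m_le: "Y (f1, f2, f3, f4) v \<noteq> 0 \<Longrightarrow> m \<le> M"
    using w_depth_leD(2)[OF depth, of f1 f2 m] by simp
  have "mult_pow scale 0 (of_nat m) Y (f1, f2, f3, f4 + of_nat m) v =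
      (\<Sum>p\<le>M. scale ((-1) ^ p * (of_nat m gchoose p)) (Y (f1, f2 - of_nat m + of_nat p, f3, f4 + of_nat m - of_nat p) v))"
    by (rule mult_pow_antiholo_window_sum[OF depth])
  also have "\<dots> = (\<Sum>p\<le>M. if p = m then scale ((-1) ^ m) (Y (f1, f2, f3, f4) v) else 0)"
  proof (rule sum.cong)
    fix p
    show "scale ((-1) ^ p * (of_nat m gchoose p)) (Y (f1, f2 - of_nat m + of_nat p, f3, f4 + of_nat m - of_nat p) v)
        = (if p = m then scale ((-1) ^ m) (Y (f1, f2, f3, f4) v) else 0)"
    proof (cases "p < m")
      case True
      then have "Y (f1, f2 - of_nat (m - p), f3, f4 + of_nat (m - p)) v = 0" by (intro bottom) simp
      with True show ?thesis by (simp add: of_nat_diff algebra_simps)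
    qed (simp_all add: binomial_gbinomial[symmetric])
  qed simp
  finally show ?thesis using m_le by auto
qed

lemma mult_pow_holo_cancel:
  assumes "w_bounded Y"
    and vanish: "\<And>e1 e2 e3 e4. P e2 e4 \<Longrightarrow> mult_pow scale h 0 Y (e1,e2,e3,e4) v = 0"
    and "P f2 f4"
  shows "Y (f1,f2,f3,f4) v = 0"
proof (rule ccontr)
  assume nz: "Y (f1,f2,f3,f4) v \<noteq> 0"
  obtain M where M: "w_depth_le Y v f3 f4 M" using assms(1) by (rule w_bounded_depth)
  define J where "J = {j. Y (f1 + of_nat j, f2, f3 - of_nat j, f4) v \<noteq> 0}"
  have "J \<subseteq> {..M}" using w_depth_leD(1)[OF M] unfolding J_def by blast
  then have "finite J" by (rule finite_subset) simp
  moreover have "0 \<in> J" using nz unfolding J_def by simp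
  ultimately have m: "Max J \<in> J" "\<And>j. j \<in> J \<Longrightarrow> j \<le> Max J"
    using Max_in Max_ge by blast+
  \<comment> \<open>The top coefficient along the diagonal survives, since (z - w)^h = z^h (1 - w/z)^h.\<close>
  have "mult_pow scale h 0 Y (f1 + of_nat (Max J) + h, f2, f3 - of_nat (Max J), f4) v
      = Y (f1 + of_nat (Max J), f2, f3 - of_nat (Max J), f4) v"
  proof (rule mult_pow_holo_top[OF w_depth_le_shift[OF M, of _ 0, simplified]])
    fix j :: nat assume "0 < j"
    then have "Max J + j \<notin> J" using m(2) by fastforce
    then show "Y (f1 + of_nat (Max J) + of_nat j, f2, f3 - of_nat (Max J) - of_nat j, f4) v = 0"
      unfolding J_def by (simp add: algebra_simps)
  qed
  also have "\<dots> \<noteq> 0" using m(1) unfolding J_def by simp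
  finally show False using vanish[OF \<open>P f2 f4\<close>] by blast
qed

lemma mult_pow_holo_eq_zero_imp:
  assumes "w_bounded Y" and "mult_pow scale h 0 Y = (\<lambda>e v. 0)"
  shows "Y = (\<lambda>e v. 0)"
proof (intro ext)
  fix e :: "'k \<times> 'k \<times> 'k \<times> 'k" and v
  obtain e1 e2 e3 e4 where e: "e = (e1,e2,e3,e4)" by (cases e)
  have "Y (e1,e2,e3,e4) v = 0"
    by (rule mult_pow_holo_cancel[OF assms(1), where P="\<lambda>_ _. True" and h=h]) (simp_all add: assms(2))
  then show "Y e v = 0" unfolding e .
qed

lemma antidiagonal_extremes:
  assumes "bar_bounded H" and "H (f1, f2, f3, f4) v \<noteq> 0"
  obtains kmin kmax :: int where "kmin \<le> kmax"
    and "H (f1, f2 + of_int kmin, f3, f4 - of_int kmin) v \<noteq> 0"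
    and "H (f1, f2 + of_int kmax, f3, f4 - of_int kmax) v \<noteq> 0"
    and "\<And>k. k < kmin \<or> kmax < k \<Longrightarrow> H (f1, f2 + of_int k, f3, f4 - of_int k) v = 0"
proof -
  obtain S where S: "finite S" and supp: "bar_supp_above H v S"
    using assms(1) unfolding bar_bounded_def by blast
  define J where "J = {k::int. H (f1, f2 + of_int k, f3, f4 - of_int k) v \<noteq> 0}"
  have "J \<subseteq> (\<Union>s\<in>S. {k. (f2 - fst s) + of_int k \<in> \<nat> \<and> (f4 - snd s) - of_int k \<in> \<nat>})"
  proof
    fix k assume "k \<in> J"
    then obtain s2 s4 where "(s2,s4) \<in> S" "f2 + of_int k - s2 \<in> \<nat>" "f4 - of_int k - s4 \<in> \<nat>"
      using supp unfolding J_def bar_supp_above_def by blast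
    then show "k \<in> (\<Union>s\<in>S. {k. (f2 - fst s) + of_int k \<in> \<nat> \<and> (f4 - snd s) - of_int k \<in> \<nat>})"
      by (intro UN_I[of "(s2,s4)"]) (simp_all add: algebra_simps)
  qed
  moreover have "finite (\<Union>s\<in>S. {k::int. (f2 - fst s) + of_int k \<in> \<nat> \<and> (f4 - snd s) - of_int k \<in> \<nat>})"
    using S finite_int_window by blast
  ultimately have fin: "finite J" by (rule finite_subset)
  have "0 \<in> J" using assms(2) unfolding J_def by simp
  then have ne: "J \<noteq> {}" by blast
  show ?thesis
  proof (rule that)
    show "Min J \<le> Max J" using fin ne by simp
    show "H (f1, f2 + of_int (Min J), f3, f4 - of_int (Min J)) v \<noteq> 0"
      using Min_in[OF fin ne] unfolding J_def by simp
    show "H (f1, f2 + of_int (Max J), f3, f4 - of_int (Max J)) v \<noteq> 0"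
      using Max_in[OF fin ne] unfolding J_def by simp
    show "H (f1, f2 + of_int k, f3, f4 - of_int k) v = 0" if "k < Min J \<or> Max J < k" for k
      using that Min_le[OF fin] Max_ge[OF fin] unfolding J_def by fastforce
  qed
qed

text \<open>The extreme nonzero coefficients k_min \<le> k_max of H on an antidiagonal produce nonzero
  coefficients of (zb - wb)^m H at zbar-exponents f2 + k_min and f2 + k_max + m, which cannot
  both be 0.\<close>

lemma indep_zbar_antiholo_poly_imp_zero:
  assumes "w_bounded H" and "bar_bounded H" and "0 < m"
    and indep: "indep_zbar (mult_pow scale 0 (of_nat m) H)"
  shows "H = (\<lambda>e v. 0)"
proof (intro ext, rule ccontr)
  fix e :: "'k \<times> 'k \<times> 'k \<times> 'k" and v
  obtain f1 f2 f3 f4 where e: "e = (f1,f2,f3,f4)" by (cases e)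
  assume "H e v \<noteq> 0"
  then obtain kmin kmax where k: "kmin \<le> kmax"
    and nz: "H (f1, f2 + of_int kmin, f3, f4 - of_int kmin) v \<noteq> 0"
      "H (f1, f2 + of_int kmax, f3, f4 - of_int kmax) v \<noteq> 0"
    and outside: "\<And>k. k < kmin \<or> kmax < k \<Longrightarrow> H (f1, f2 + of_int k, f3, f4 - of_int k) v = 0"
    using antidiagonal_extremes[OF assms(2)] unfolding e by metis
  have vanish: "f2' = 0" if "mult_pow scale 0 (of_nat m) H (f1, f2', f3, f4') v \<noteq> 0" for f2' f4'
    using indep that unfolding indep_zbar_def by blast
  obtain M1 where M1: "w_depth_le H v f3 (f4 - of_int kmax) M1"
    using assms(1) by (rule w_bounded_depth)
  have "mult_pow scale 0 (of_nat m) H (f1, f2 + of_int kmax + of_nat m, f3, f4 - of_int kmax) v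
      = H (f1, f2 + of_int kmax, f3, f4 - of_int kmax) v"
  proof (rule mult_pow_antiholo_top[OF M1])
    fix k :: nat assume "0 < k"
    then show "H (f1, f2 + of_int kmax + of_nat k, f3, f4 - of_int kmax - of_nat k) v = 0"
      using outside[of "kmax + int k"] by (simp add: algebra_simps)
  qed
  with nz(2) have top: "f2 + of_int kmax + of_nat m = 0" by (intro vanish[where f4'="f4 - of_int kmax"]) simp
  obtain M2 where M2: "w_depth_le H v f3 (f4 - of_int kmin + of_nat m) M2"
    using assms(1) by (rule w_bounded_depth)
  have "mult_pow scale 0 (of_nat m) H (f1, f2 + of_int kmin, f3, f4 - of_int kmin + of_nat m) v
      = scale ((-1) ^ m) (H (f1, f2 + of_int kmin, f3, f4 - of_int kmin) v)"
  proof (rule mult_pow_antiholo_bottom[OF M2])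
    fix k :: nat assume "0 < k"
    then show "H (f1, f2 + of_int kmin - of_nat k, f3, f4 - of_int kmin + of_nat k) v = 0"
      using outside[of "kmin - int k"] by (simp add: algebra_simps)
  qed
  with nz(1) have bottom: "f2 + of_int kmin = 0" by (intro vanish[where f4'="f4 - of_int kmin + of_nat m"]) simp
  have "(of_int (kmax + int m) :: 'k) = (f2 + of_int kmax + of_nat m) - (f2 + of_int kmin) + of_int kmin"
    by simp
  then have "(of_int (kmax + int m) :: 'k) = of_int kmin" unfolding top bottom by simp
  then have "kmax + int m = kmin" by (rule of_int_eq_iff[THEN iffD1])
  with k \<open>0 < m\<close> show False by simp
qed

end

section \<open>Independence of the power series (1 - x)^(-\<beta>)\<close>

definition pow_coeff :: "'k::field_char_0 \<Rightarrow> nat \<Rightarrow> 'k" where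
  "pow_coeff \<beta> p = (-1) ^ p * ((- \<beta>) gchoose p)"

definition shift :: "nat \<Rightarrow> (nat \<Rightarrow> 'v::zero) \<Rightarrow> nat \<Rightarrow> 'v" where
  "shift d F n = (if d \<le> n then F (n - d) else 0)"

definition down_from :: "'k::ring_1 \<Rightarrow> nat \<Rightarrow> 'k list" where
  "down_from \<beta> D = map (\<lambda>k. \<beta> - of_nat k) [0..<D]"

lemma pow_coeff_0 [simp]: "pow_coeff \<beta> 0 = 1"
  by (simp add: pow_coeff_def)

lemma pow_coeff_zero: "pow_coeff 0 p = (if p = 0 then 1 else 0)"
  by (simp add: pow_coeff_def gbinomial_0_left)

lemma pow_coeff_Suc: "of_nat (Suc n) * pow_coeff \<beta> (Suc n) = (\<beta> + of_nat n) * pow_coeff \<beta> n"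
proof -
  have "of_nat (Suc n) * ((- \<beta>) gchoose Suc n) = (- \<beta> - of_nat n) * ((- \<beta>) gchoose n)"
    using gbinomial_absorption[of n "- \<beta>"] gbinomial_absorb_comp[of "- \<beta>" n] by simp
  then have "of_nat (Suc n) * pow_coeff \<beta> (Suc n) = (-1) ^ Suc n * ((- \<beta> - of_nat n) * ((- \<beta>) gchoose n))"
    unfolding pow_coeff_def by (metis mult.left_commute)
  also have "\<dots> = (\<beta> + of_nat n) * pow_coeff \<beta> n"
    by (simp add: pow_coeff_def algebra_simps)
  finally show ?thesis .
qed

lemma pow_coeff_Suc_diff: "pow_coeff \<beta> (Suc m) - pow_coeff (\<beta> - 1) (Suc m) = pow_coeff \<beta> m"
  using gbinomial_Suc_Suc[of "- \<beta>" m] unfolding pow_coeff_def by (simp add: algebra_simps)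

lemma shift_0 [simp]: "shift 0 F = F"
  by (simp add: shift_def fun_eq_iff)

lemma shift_Suc: "shift (Suc d) F = shift d (shift 1 F)"
  by (auto simp: shift_def fun_eq_iff)

lemma shift_diff: "shift d (\<lambda>n. F n - G n) = (\<lambda>n. shift d F n - shift d G n)"
  for F G :: "nat \<Rightarrow> 'v::ab_group_add"
  by (auto simp: shift_def)

lemma down_from_Suc: "down_from \<beta> (Suc D) = \<beta> # down_from (\<beta> - 1) D"
proof -
  have "[0..<Suc D] = 0 # map Suc [0..<D]" by (simp add: upt_conv_Cons map_Suc_upt)
  then show ?thesis unfolding down_from_def by (simp add: algebra_simps)
qed

lemma down_from_congruent: "x \<in> set (down_from \<beta> D) \<Longrightarrow> \<beta> - x \<in> \<int>"
  unfolding down_from_def by auto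

context char0_vector_space
begin

text \<open>For F the coefficients of the power series \<Sum>n. F n x^n with values in V,
  deriv_op \<rho> F are the coefficients of (1 - x) F' - \<rho> F, pow_series \<beta> w those of
  (1 - x)^(-\<beta>) w, and pow_mult \<beta> Q those of (1 - x)^(-\<beta>) Q.\<close>

definition deriv_op :: "'k \<Rightarrow> (nat \<Rightarrow> 'v) \<Rightarrow> nat \<Rightarrow> 'v" where
  "deriv_op \<rho> F n = scale (of_nat (Suc n)) (F (Suc n)) - scale (of_nat n) (F n) - scale \<rho> (F n)"

primrec deriv_ops :: "'k list \<Rightarrow> (nat \<Rightarrow> 'v) \<Rightarrow> nat \<Rightarrow> 'v" where
  "deriv_ops [] F = F"
| "deriv_ops (\<rho> # \<rho>s) F = deriv_op \<rho> (deriv_ops \<rho>s F)"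

definition pow_series :: "'k \<Rightarrow> 'v \<Rightarrow> nat \<Rightarrow> 'v" where
  "pow_series \<beta> w n = scale (pow_coeff \<beta> n) w"

definition pow_mult :: "'k \<Rightarrow> (nat \<Rightarrow> 'v) \<Rightarrow> nat \<Rightarrow> 'v" where
  "pow_mult \<beta> Q n = (\<Sum>p\<le>n. scale (pow_coeff \<beta> p) (Q (n - p)))"

lemma deriv_op_zero: "deriv_op \<rho> (\<lambda>n. 0) = (\<lambda>n. 0)"
  by (simp add: deriv_op_def fun_eq_iff)

lemma deriv_op_diff: "deriv_op \<rho> (\<lambda>n. F n - G n) = (\<lambda>n. deriv_op \<rho> F n - deriv_op \<rho> G n)"
  by (simp add: deriv_op_def fun_eq_iff algebra_simps)

lemma deriv_op_scale: "deriv_op \<rho> (\<lambda>n. scale a (F n)) = (\<lambda>n. scale a (deriv_op \<rho> F n))"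
  by (simp add: deriv_op_def fun_eq_iff algebra_simps scale_left_commute)

lemma deriv_op_sum: "deriv_op \<rho> (\<lambda>n. \<Sum>j\<in>A. G j n) = (\<lambda>n. \<Sum>j\<in>A. deriv_op \<rho> (G j) n)"
  by (simp add: deriv_op_def fun_eq_iff scale_sum_right sum_subtractf)

lemma deriv_op_commute: "deriv_op \<rho> (deriv_op \<sigma> F) = deriv_op \<sigma> (deriv_op \<rho> F)"
  by (simp add: deriv_op_def fun_eq_iff scale_right_diff_distrib
      scale_left_commute[of \<rho>] scale_left_commute[of \<sigma>] algebra_simps)

lemma deriv_ops_zero: "deriv_ops \<rho>s (\<lambda>n. 0) = (\<lambda>n. 0)"
  by (induction \<rho>s) (simp_all add: deriv_op_zero)

lemma deriv_ops_diff: "deriv_ops \<rho>s (\<lambda>n. F n - G n) = (\<lambda>n. deriv_ops \<rho>s F n - deriv_ops \<rho>s G n)"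
  by (induction \<rho>s) (simp_all add: deriv_op_diff)

lemma deriv_ops_sum: "deriv_ops \<rho>s (\<lambda>n. \<Sum>j\<in>A. G j n) = (\<lambda>n. \<Sum>j\<in>A. deriv_ops \<rho>s (G j) n)"
  by (induction \<rho>s) (simp_all add: deriv_op_sum)

lemma deriv_ops_append: "deriv_ops (\<rho>s @ \<sigma>s) F = deriv_ops \<rho>s (deriv_ops \<sigma>s F)"
  by (induction \<rho>s) simp_all

lemma deriv_ops_deriv_op: "deriv_ops \<rho>s (deriv_op \<sigma> F) = deriv_op \<sigma> (deriv_ops \<rho>s F)"
  by (induction \<rho>s) (simp_all add: deriv_op_commute)

lemma deriv_ops_commute: "deriv_ops \<rho>s (deriv_ops \<sigma>s F) = deriv_ops \<sigma>s (deriv_ops \<rho>s F)"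
  by (induction \<sigma>s) (simp_all add: deriv_ops_deriv_op)

lemma deriv_ops_append_kill:
  assumes "deriv_ops \<sigma>s F = (\<lambda>n. 0)"
  shows "deriv_ops (\<rho>s @ \<sigma>s @ \<tau>s) F = (\<lambda>n. 0)"
  by (simp add: deriv_ops_append deriv_ops_commute[of \<sigma>s] assms deriv_ops_zero)

lemma deriv_ops_eigen:
  assumes "deriv_op \<sigma> F = (\<lambda>n. 0)"
  shows "deriv_ops \<rho>s F = (\<lambda>n. scale (\<Prod>\<rho>\<leftarrow>\<rho>s. \<sigma> - \<rho>) (F n))"
proof (induction \<rho>s)
  case (Cons \<rho> \<rho>s)
  have eigen: "deriv_op \<rho> F n = scale (\<sigma> - \<rho>) (F n)" for n
    using fun_cong[OF assms, of n] by (simp add: deriv_op_def scale_left_diff_distrib)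
  have "deriv_ops (\<rho> # \<rho>s) F = deriv_op \<rho> (\<lambda>n. scale (\<Prod>\<rho>\<leftarrow>\<rho>s. \<sigma> - \<rho>) (F n))"
    using Cons.IH by simp
  then show ?case by (simp add: deriv_op_scale eigen mult.commute)
qed simp

lemma deriv_ops_disjoint_kill:
  assumes "deriv_ops \<rho>s F = (\<lambda>n. 0)" and "deriv_ops \<sigma>s F = (\<lambda>n. 0)"
    and "set \<rho>s \<inter> set \<sigma>s = {}"
  shows "F = (\<lambda>n. 0)"
  using assms
proof (induction \<sigma>s arbitrary: F)
  case (Cons \<sigma> \<sigma>s)
  define G where "G = deriv_ops \<sigma>s F"
  have "deriv_op \<sigma> G = (\<lambda>n. 0)" using Cons.prems(2) unfolding G_def by simp
  moreover have "deriv_ops \<rho>s G = (\<lambda>n. 0)"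
    unfolding G_def deriv_ops_commute[of \<rho>s] Cons.prems(1) deriv_ops_zero ..
  ultimately have "scale (\<Prod>\<rho>\<leftarrow>\<rho>s. \<sigma> - \<rho>) (G n) = 0" for n
    using deriv_ops_eigen by metis
  moreover have "(\<Prod>\<rho>\<leftarrow>\<rho>s. \<sigma> - \<rho>) \<noteq> 0"
    using Cons.prems(3) by (auto simp: prod_list_zero_iff)
  ultimately have "G = (\<lambda>n. 0)" by auto
  then show ?case using Cons.IH Cons.prems(1,3) unfolding G_def by auto
qed simp

lemma deriv_ops_concat_kill:
  assumes "j \<in> set js" and "deriv_ops (f j) F = (\<lambda>n. 0)"
  shows "deriv_ops (concat (map f js) @ \<tau>s) F = (\<lambda>n. 0)"
proof -
  obtain us ws where "js = us @ j # ws" using assms(1) by (meson in_set_conv_decomp)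
  then have "concat (map f js) @ \<tau>s = concat (map f us) @ f j @ (concat (map f ws) @ \<tau>s)" by simp
  then show ?thesis using deriv_ops_append_kill[OF assms(2)] by metis
qed

lemma deriv_op_pow_series: "deriv_op \<beta> (pow_series \<beta> w) = (\<lambda>n. 0)"
proof
  fix n
  have "deriv_op \<beta> (pow_series \<beta> w) n = scale (of_nat (Suc n) * pow_coeff \<beta> (Suc n)
      - of_nat n * pow_coeff \<beta> n - \<beta> * pow_coeff \<beta> n) w"
    by (simp add: deriv_op_def pow_series_def scale_left_diff_distrib)
  also have "of_nat (Suc n) * pow_coeff \<beta> (Suc n) - of_nat n * pow_coeff \<beta> n - \<beta> * pow_coeff \<beta> n = 0"
    unfolding pow_coeff_Suc by (simp add: algebra_simps)
  finally show "deriv_op \<beta> (pow_series \<beta> w) n = 0" by simp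
qed

text \<open>shift 1 is multiplication by x = 1 - (1 - x).\<close>

lemma shift_pow_series: "shift 1 (pow_series \<beta> w) = (\<lambda>n. pow_series \<beta> w n - pow_series (\<beta> - 1) w n)"
proof
  fix n
  show "shift 1 (pow_series \<beta> w) n = pow_series \<beta> w n - pow_series (\<beta> - 1) w n"
  proof (cases n)
    case (Suc m)
    then show ?thesis
      using pow_coeff_Suc_diff[of \<beta> m] by (simp add: shift_def pow_series_def scale_left_diff_distrib[symmetric])
  qed (simp add: shift_def pow_series_def)
qed

lemma deriv_ops_down_from_kill_shift:
  assumes "d < D"
  shows "deriv_ops (down_from \<beta> D) (shift d (pow_series \<beta> w)) = (\<lambda>n. 0)"
  using assms
proof (induction d arbitrary: \<beta> D)
  case 0
  then obtain D' where D: "down_from \<beta> D = [] @ [\<beta>] @ down_from (\<beta> - 1) D'"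
    using down_from_Suc by (cases D) auto
  have "deriv_ops ([] @ [\<beta>] @ down_from (\<beta> - 1) D') (pow_series \<beta> w) = (\<lambda>n. 0)"
    by (rule deriv_ops_append_kill) (simp add: deriv_op_pow_series)
  then show ?case unfolding D by simp
next
  case (Suc d)
  then obtain D' where D': "D = Suc D'" "d < D'" by (cases D) auto
  have "shift (Suc d) (pow_series \<beta> w)
      = (\<lambda>n. shift d (pow_series \<beta> w) n - shift d (pow_series (\<beta> - 1) w) n)"
    unfolding shift_Suc[of d] shift_pow_series shift_diff ..
  moreover have "deriv_ops (down_from \<beta> D) (shift d (pow_series \<beta> w)) = (\<lambda>n. 0)"
    using Suc by simp
  moreover have "deriv_ops ([\<beta>] @ down_from (\<beta> - 1) D' @ []) (shift d (pow_series (\<beta> - 1) w)) = (\<lambda>n. 0)"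
    using Suc.IH[OF D'(2)] by (rule deriv_ops_append_kill)
  ultimately show ?case using D'(1) by (simp add: deriv_ops_diff down_from_Suc)
qed

lemma pow_mult_eq_sum_shift:
  assumes "\<And>k. D \<le> k \<Longrightarrow> Q k = 0"
  shows "pow_mult \<beta> Q = (\<lambda>n. \<Sum>d<D. shift d (pow_series \<beta> (Q d)) n)"
proof
  fix n
  have "(\<Sum>d<D. shift d (pow_series \<beta> (Q d)) n)
      = (\<Sum>d<D. if d \<le> n then scale (pow_coeff \<beta> (n - d)) (Q d) else 0)"
    unfolding shift_def pow_series_def ..
  also have "\<dots> = (\<Sum>d\<in>{d\<in>{..<D}. d \<le> n}. scale (pow_coeff \<beta> (n - d)) (Q d))"
    by (rule sum.inter_filter[symmetric]) simp
  also have "\<dots> = (\<Sum>d\<le>n. scale (pow_coeff \<beta> (n - d)) (Q d))"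
  proof (rule sum.mono_neutral_left)
    show "\<forall>d\<in>{..n} - {d\<in>{..<D}. d \<le> n}. scale (pow_coeff \<beta> (n - d)) (Q d) = 0"
    proof
      fix d assume "d \<in> {..n} - {d\<in>{..<D}. d \<le> n}"
      then have "D \<le> d" by auto
      then show "scale (pow_coeff \<beta> (n - d)) (Q d) = 0" by (simp add: assms)
    qed
  qed auto
  also have "\<dots> = (\<Sum>p\<le>n. scale (pow_coeff \<beta> p) (Q (n - p)))"
    by (rule sum.reindex_bij_witness[of _ "\<lambda>p. n - p" "\<lambda>d. n - d"]) auto
  finally show "pow_mult \<beta> Q n = (\<Sum>d<D. shift d (pow_series \<beta> (Q d)) n)"
    unfolding pow_mult_def ..
qed

lemma deriv_ops_down_from_kill_pow_mult:
  assumes "\<And>k. D \<le> k \<Longrightarrow> Q k = 0"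
  shows "deriv_ops (down_from \<beta> D) (pow_mult \<beta> Q) = (\<lambda>n. 0)"
proof -
  have "deriv_ops (down_from \<beta> D) (pow_mult \<beta> Q)
      = deriv_ops (down_from \<beta> D) (\<lambda>n. \<Sum>d<D. shift d (pow_series \<beta> (Q d)) n)"
    using pow_mult_eq_sum_shift[OF assms] by simp
  also have "\<dots> = (\<lambda>n. \<Sum>d<D. deriv_ops (down_from \<beta> D) (shift d (pow_series \<beta> (Q d))) n)"
    by (rule deriv_ops_sum)
  finally show ?thesis by (simp add: deriv_ops_down_from_kill_shift)
qed

lemma pow_mult_zero_left: "pow_mult 0 Q = Q"
proof
  fix n
  have "pow_mult 0 Q n = (\<Sum>p\<le>n. if p = 0 then Q n else 0)"
    unfolding pow_mult_def pow_coeff_zero by (intro sum.cong) auto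
  then show "pow_mult 0 Q n = Q n" by simp
qed

lemma pow_mult_eq_zero_imp:
  assumes "pow_mult \<beta> Q = (\<lambda>n. 0)"
  shows "Q = (\<lambda>n. 0)"
proof
  fix k
  show "Q k = 0"
  proof (induction k rule: less_induct)
    case (less k)
    have "pow_mult \<beta> Q k = (\<Sum>p\<le>k. if p = 0 then Q k else 0)"
      unfolding pow_mult_def using less by (intro sum.cong) auto
    then show ?case using assms by (simp add: fun_eq_iff)
  qed
qed

text \<open>deriv_ops (down_from \<beta> D) annihilates (1 - x)^(-\<beta>) times any polynomial of degree
  below D. The operators for all \<beta> j with j \<noteq> i and for \<beta> = 0 kill the other terms and the
  polynomial sum, hence the i-th term; so do those for \<beta> i, and the two lists of eigenvalues are
  disjoint because \<beta> i is incongruent to every \<beta> j and to 0.\<close>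

lemma pow_mult_independent_mod_poly:
  fixes n :: nat and Q :: "nat \<Rightarrow> nat \<Rightarrow> 'v" and \<beta> :: "nat \<Rightarrow> 'k"
  assumes supp: "\<And>j k. j < n \<Longrightarrow> D \<le> k \<Longrightarrow> Q j k = 0"
    and poly: "\<And>k. D \<le> k \<Longrightarrow> (\<Sum>j<n. pow_mult (\<beta> j) (Q j) k) = 0"
    and i: "i < n" "\<beta> i \<notin> \<int>"
    and incongruent: "\<And>j. j < n \<Longrightarrow> j \<noteq> i \<Longrightarrow> \<beta> i - \<beta> j \<notin> \<int>"
  shows "Q i = (\<lambda>k. 0)"
proof -
  define P where "P k = (\<Sum>j<n. pow_mult (\<beta> j) (Q j) k)" for k
  define others where "others = concat (map (\<lambda>j. down_from (\<beta> j) D) (filter (\<lambda>j. j \<noteq> i) [0..<n]))"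
  define \<rho>s where "\<rho>s = others @ down_from 0 D"
  have kill: "deriv_ops (down_from (\<beta> j) D) (pow_mult (\<beta> j) (Q j)) = (\<lambda>k. 0)" if "j < n" for j
    using supp[OF that] by (rule deriv_ops_down_from_kill_pow_mult)
  have kill_others: "deriv_ops \<rho>s (pow_mult (\<beta> j) (Q j)) = (\<lambda>k. 0)" if "j < n" "j \<noteq> i" for j
    unfolding \<rho>s_def others_def using that kill by (intro deriv_ops_concat_kill) auto
  have "deriv_ops (down_from 0 D) (pow_mult 0 P) = (\<lambda>k. 0)"
    using poly unfolding P_def by (intro deriv_ops_down_from_kill_pow_mult)
  then have "deriv_ops (others @ down_from 0 D @ []) P = (\<lambda>k. 0)"
    unfolding pow_mult_zero_left by (rule deriv_ops_append_kill)
  then have kill_P: "deriv_ops \<rho>s P = (\<lambda>k. 0)" unfolding \<rho>s_def by simp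
  have "pow_mult (\<beta> i) (Q i) = (\<lambda>k. P k - (\<Sum>j\<in>{..<n} - {i}. pow_mult (\<beta> j) (Q j) k))"
    unfolding P_def using i(1) by (simp add: sum.remove)
  then have "deriv_ops \<rho>s (pow_mult (\<beta> i) (Q i)) = (\<lambda>k. 0)"
    by (simp add: deriv_ops_diff deriv_ops_sum kill_P kill_others)
  moreover have "deriv_ops (down_from (\<beta> i) D) (pow_mult (\<beta> i) (Q i)) = (\<lambda>k. 0)"
    using i(1) by (rule kill)
  moreover have "set \<rho>s \<inter> set (down_from (\<beta> i) D) = {}"
  proof (rule ccontr)
    assume "set \<rho>s \<inter> set (down_from (\<beta> i) D) \<noteq> {}"
    then obtain x where x: "x \<in> set \<rho>s" and xi: "\<beta> i - x \<in> \<int>"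
      by (blast dest: down_from_congruent)
    from x consider j where "j < n" "j \<noteq> i" "\<beta> j - x \<in> \<int>" | "0 - x \<in> \<int>"
      unfolding \<rho>s_def others_def by (auto dest: down_from_congruent)
    then show False
    proof cases
      case 1
      from xi 1(3) have "(\<beta> i - x) - (\<beta> j - x) \<in> \<int>" by (rule Ints_diff)
      then show False using incongruent 1 by simp
    next
      case 2
      from xi 2 have "(\<beta> i - x) - (0 - x) \<in> \<int>" by (rule Ints_diff)
      then show False using i(2) by simp
    qed
  qed
  ultimately have "pow_mult (\<beta> i) (Q i) = (\<lambda>k. 0)" by (rule deriv_ops_disjoint_kill)
  then show ?thesis by (rule pow_mult_eq_zero_imp)
qed

section \<open>Antiholomorphic pole orders\<close>

lemma mult_pow_antiholo_as_pow_mult: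
  assumes "w_bounded H"
    and below: "\<And>x1 x2 d. 0 < d \<Longrightarrow> H (x1, x2, e3, b - of_nat d) v = 0"
  shows "mult_pow scale 0 (- \<beta>) H (e1, t - (b + of_nat k), e3, b + of_nat k) v
       = pow_mult \<beta> (\<lambda>k. H (e1, t + \<beta> - (b + of_nat k), e3, b + of_nat k) v) k"
proof -
  obtain M where "w_depth_le H v e3 (b + of_nat k) M" using assms(1) by (rule w_bounded_depth)
  then have M: "w_depth_le H v e3 (b + of_nat k) (max M k)" by (rule w_depth_le_mono) simp
  define g where "g p = scale ((-1) ^ p * ((- \<beta>) gchoose p))
      (H (e1, t - (b + of_nat k) - - \<beta> + of_nat p, e3, b + of_nat k - of_nat p) v)" for p
  have "mult_pow scale 0 (- \<beta>) H (e1, t - (b + of_nat k), e3, b + of_nat k) v = (\<Sum>p\<le>max M k. g p)"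
    unfolding g_def by (rule mult_pow_antiholo_window_sum[OF M])
  also have "\<dots> = (\<Sum>p\<le>k. g p)"
  proof (rule sum.mono_neutral_right)
    show "\<forall>p\<in>{..max M k} - {..k}. g p = 0"
    proof
      fix p assume "p \<in> {..max M k} - {..k}"
      then have eq: "b + of_nat k - of_nat p = b - of_nat (p - k)" and pos: "0 < p - k"
        by (auto simp: of_nat_diff algebra_simps)
      show "g p = 0" unfolding g_def eq using below[OF pos] by simp
    qed
  qed auto
  also have "\<dots> = pow_mult \<beta> (\<lambda>k. H (e1, t + \<beta> - (b + of_nat k), e3, b + of_nat k) v) k"
    unfolding pow_mult_def pow_coeff_def g_def
    by (intro sum.cong refl) (simp add: of_nat_diff algebra_simps)
  finally show ?thesis .
qed

lemma bar_bounded_family_zbar_tail: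
  fixes H :: "nat \<Rightarrow> ('k, 'v) dist" and r :: nat
  assumes "\<And>j. j < r \<Longrightarrow> bar_bounded (H j)"
  obtains D :: nat where "\<And>j k x1 x3 x4. j < r \<Longrightarrow> D \<le> k \<Longrightarrow> H j (x1, c j - of_nat k, x3, x4) v = 0"
proof -
  have "\<forall>j. \<exists>S. j < r \<longrightarrow> finite S \<and> bar_supp_above (H j) v S"
    using assms unfolding bar_bounded_def by blast
  then obtain S where S: "\<And>j. j < r \<Longrightarrow> finite (S j)" "\<And>j. j < r \<Longrightarrow> bar_supp_above (H j) v (S j)"
    by metis
  define A where "A = (\<Union>j<r. (\<lambda>s. c j - fst s) ` S j)"
  have "finite A" unfolding A_def using S(1) by simp
  then obtain D where D: "\<And>a k. a \<in> A \<Longrightarrow> a - of_nat k \<in> \<nat> \<Longrightarrow> k < D"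
    by (rule Nats_minus_of_nat_bounded) metis
  show ?thesis
  proof (rule that, rule ccontr)
    fix j k x1 x3 x4 assume j: "j < r" and k: "D \<le> k" and "H j (x1, c j - of_nat k, x3, x4) v \<noteq> 0"
    then obtain s2 s4 where s: "(s2,s4) \<in> S j" "c j - of_nat k - s2 \<in> \<nat>"
      using S(2) unfolding bar_supp_above_def by blast
    have "c j - s2 \<in> A" unfolding A_def using j s(1) by force
    moreover have "(c j - s2) - of_nat k \<in> \<nat>" using s(2) by (simp add: algebra_simps)
    ultimately show False using D k by fastforce
  qed
qed

lemma bar_bounded_family_wbar_tail:
  fixes H :: "nat \<Rightarrow> ('k, 'v) dist" and r :: nat
  assumes "\<And>j. j < r \<Longrightarrow> bar_bounded (H j)"
  obtains D :: nat where "\<And>j k x1 x2 x3. j < r \<Longrightarrow> D \<le> k \<Longrightarrow> H j (x1, x2, x3, c - of_nat k) v = 0"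
proof -
  have "\<forall>j. \<exists>S. j < r \<longrightarrow> finite S \<and> bar_supp_above (H j) v S"
    using assms unfolding bar_bounded_def by blast
  then obtain S where S: "\<And>j. j < r \<Longrightarrow> finite (S j)" "\<And>j. j < r \<Longrightarrow> bar_supp_above (H j) v (S j)"
    by metis
  define A where "A = (\<Union>j<r. (\<lambda>s. c - snd s) ` S j)"
  have "finite A" unfolding A_def using S(1) by simp
  then obtain D where D: "\<And>a k. a \<in> A \<Longrightarrow> a - of_nat k \<in> \<nat> \<Longrightarrow> k < D"
    by (rule Nats_minus_of_nat_bounded) metis
  show ?thesis
  proof (rule that, rule ccontr)
    fix j k x1 x2 x3 assume j: "j < r" and k: "D \<le> k" and "H j (x1, x2, x3, c - of_nat k) v \<noteq> 0"
    then obtain s2 s4 where s: "(s2,s4) \<in> S j" "c - of_nat k - s4 \<in> \<nat>"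
      using S(2) unfolding bar_supp_above_def by blast
    have "c - s4 \<in> A" unfolding A_def using j s(1) by force
    moreover have "(c - s4) - of_nat k \<in> \<nat>" using s(2) by (simp add: algebra_simps)
    ultimately show False using D k by fastforce
  qed
qed

text \<open>Along the antidiagonal of total degree t in (zbar, wbar), with fixed z- and w-exponents,
  multiplication by (zb - wb)^(-\<beta> j) is multiplication of a polynomial Q j by (1 - x)^(-\<beta> j); the
  sum over j can only be nonzero in zbar-degree 0, hence is a polynomial.\<close>

lemma indep_zbar_nonintegral_antiholo_vanishes:
  fixes H :: "nat \<Rightarrow> ('k, 'v) dist" and \<beta> :: "nat \<Rightarrow> 'k" and r :: nat
  assumes w_bounded: "\<And>j. j < r \<Longrightarrow> w_bounded (H j)"
    and bar_bounded: "\<And>j. j < r \<Longrightarrow> bar_bounded (H j)"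
    and indep: "indep_zbar (\<lambda>e v. \<Sum>j<r. mult_pow scale 0 (- \<beta> j) (H j) e v)"
    and incongruent: "\<And>j. j < r \<Longrightarrow> j \<noteq> i \<Longrightarrow> \<beta> i - \<beta> j \<notin> \<int>"
    and i: "i < r" "\<beta> i \<notin> \<int>"
  shows "H i = (\<lambda>e v. 0)"
proof (intro ext)
  fix e :: "'k \<times> 'k \<times> 'k \<times> 'k" and v
  obtain e1 e2 e3 e4 where e: "e = (e1,e2,e3,e4)" by (cases e)
  obtain L where L: "\<And>j k x1 x2 x3. j < r \<Longrightarrow> L \<le> k \<Longrightarrow> H j (x1, x2, x3, e4 - of_nat k) v = 0"
    using bar_bounded_family_wbar_tail[where H=H and r=r and c=e4 and v=v, OF bar_bounded] by blast
  define b where "b = e4 - of_nat L"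
  have below: "H j (x1, x2, x3, b - of_nat d) v = 0" if "j < r" for j x1 x2 x3 d
    using L[OF that, of "L + d"] unfolding b_def by (simp add: algebra_simps)
  define t where "t = e2 + e4 - \<beta> i"
  define Q where "Q j k = H j (e1, t + \<beta> j - (b + of_nat k), e3, b + of_nat k) v" for j k
  obtain D0 where D0: "\<And>j k x1 x3 x4. j < r \<Longrightarrow> D0 \<le> k \<Longrightarrow> H j (x1, (t + \<beta> j - b) - of_nat k, x3, x4) v = 0"
    using bar_bounded_family_zbar_tail[where H=H and r=r and c="\<lambda>j. t + \<beta> j - b" and v=v, OF bar_bounded]
    by blast
  obtain D1 where D1: "\<And>k. (t - b) - of_nat k \<in> \<nat> \<Longrightarrow> k < D1"
    using finite_Nats_minus_of_nat[of "t - b"] unfolding finite_nat_set_iff_bounded by blast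
  define D where "D = max D0 D1"
  have supp: "Q j k = 0" if "j < r" "D \<le> k" for j k
    using D0[of j k] that unfolding Q_def D_def by (simp add: algebra_simps)
  have poly: "(\<Sum>j<r. pow_mult (\<beta> j) (Q j) k) = 0" if "D \<le> k" for k
  proof -
    have "t - (b + of_nat k) \<noteq> 0"
      using D1[of k] that unfolding D_def by (auto simp: algebra_simps)
    then have "(\<Sum>j<r. mult_pow scale 0 (- \<beta> j) (H j) (e1, t - (b + of_nat k), e3, b + of_nat k) v) = 0"
      using indep unfolding indep_zbar_def by blast
    moreover have "mult_pow scale 0 (- \<beta> j) (H j) (e1, t - (b + of_nat k), e3, b + of_nat k) v
        = pow_mult (\<beta> j) (Q j) k" if "j < r" for j
      unfolding Q_def using that
      by (intro mult_pow_antiholo_as_pow_mult w_bounded below)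
    ultimately show ?thesis by simp
  qed
  have "Q i = (\<lambda>k. 0)"
    using supp poly i incongruent by (rule pow_mult_independent_mod_poly)
  then have "Q i L = 0" by simp
  moreover have "Q i L = H i e v" unfolding Q_def e b_def t_def by (simp add: algebra_simps)
  ultimately show "H i e v = 0" by simp
qed

lemma indep_zbar_mult_pow_holo_cancel:
  assumes "w_bounded Y" and "indep_zbar (mult_pow scale h 0 Y)"
  shows "indep_zbar Y"
  unfolding indep_zbar_def
proof (intro allI impI)
  fix e1 e2 e3 e4 v assume "e2 \<noteq> (0::'k)"
  show "Y (e1, e2, e3, e4) v = 0"
    by (rule mult_pow_holo_cancel[OF assms(1), where P="\<lambda>e2 e4. e2 \<noteq> 0" and h=h])
      (use assms(2) \<open>e2 \<noteq> 0\<close> in \<open>simp_all add: indep_zbar_def\<close>)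
qed

lemma indep_zbar_mult_pow_imp_field_antiholo:
  assumes field: "is_field scale c" and indep: "indep_zbar (mult_pow scale h hb c)"
  shows "is_field scale (mult_pow scale 0 hb c)"
proof (rule field_mult_pow_antiholo[OF field])
  have "mult_pow scale h 0 (mult_pow scale 0 hb c) = mult_pow scale h hb c"
    using w_bounded_field[OF field] by (rule mult_pow_eq_holo_antiholo[symmetric])
  then show "indep_zbar (mult_pow scale 0 hb c)"
    using indep w_bounded_mult_pow[OF w_bounded_field[OF field]] indep_zbar_mult_pow_holo_cancel by metis
qed

lemma field_indep_zbar_antiholo_poly_imp_zero:
  assumes field: "is_field scale c" and "0 < m" and indep: "indep_zbar (mult_pow scale h (of_nat m) c)"
  shows "c = (\<lambda>e v. 0)"
proof -
  define H where "H = mult_pow scale h 0 c"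
  have "mult_pow scale h (of_nat m) c = mult_pow scale 0 (of_nat m) H"
    unfolding H_def using w_bounded_field[OF field] by (rule mult_pow_eq_antiholo_holo)
  moreover have "w_bounded H"
    unfolding H_def by (rule w_bounded_mult_pow[OF w_bounded_field[OF field]])
  moreover have "bar_bounded H"
    unfolding H_def by (rule bar_bounded_mult_pow_holo[OF bar_bounded_field[OF field]])
  ultimately have "H = (\<lambda>e v. 0)"
    using \<open>0 < m\<close> indep by (metis indep_zbar_antiholo_poly_imp_zero)
  then show ?thesis
    unfolding H_def by (rule mult_pow_holo_eq_zero_imp[OF w_bounded_field[OF field]])
qed

lemma indep_zbar_integral_antiholo_order_zero:
  assumes field: "is_field scale c" and nonzero: "c \<noteq> (\<lambda>e v. 0)" and "hb \<in> \<int>"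
    and indep: "indep_zbar (mult_pow scale h (- hb) c)"
    and irreducible: "\<And>m. 0 < m \<Longrightarrow> \<not> is_field scale (mult_pow scale 0 (- of_nat m) c)"
  shows "hb = 0"
proof -
  obtain z where z: "hb = of_int z" using \<open>hb \<in> \<int>\<close> by (auto elim: Ints_cases)
  consider "z < 0" | "z = 0" | "0 < z" by linarith
  then show ?thesis
  proof cases
    case 1
    then have m: "- hb = of_nat (nat (- z))" "0 < nat (- z)" using z by simp_all
    have "c = (\<lambda>e v. 0)"
      using field m(2) indep unfolding m(1) by (rule field_indep_zbar_antiholo_poly_imp_zero)
    with nonzero show ?thesis by contradiction
  next
    case 3
    then have m: "hb = of_nat (nat z)" "0 < nat z" using z by simp_all
    have "is_field scale (mult_pow scale 0 (- hb) c)"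
      using field indep by (rule indep_zbar_mult_pow_imp_field_antiholo)
    with irreducible[OF m(2)] show ?thesis unfolding m(1) by contradiction
  qed (simp add: z)
qed

lemma ope_antiholo_order_integral:
  assumes ope: "is_ope scale a r hs cs" and indep: "indep_zbar a"
    and nonzero: "cs i \<noteq> (\<lambda>e v. 0)" and i: "i < r"
    and incongruent: "\<And>j. j < r \<Longrightarrow> j \<noteq> i \<Longrightarrow> snd (hs i) - snd (hs j) \<notin> \<int>"
  shows "snd (hs i) \<in> \<int>"
proof (rule ccontr)
  assume nonintegral: "snd (hs i) \<notin> \<int>"
  have fields: "\<And>j. j < r \<Longrightarrow> is_field scale (cs j)"
    using ope unfolding is_ope_def by simp
  have a: "a = (\<lambda>e v. \<Sum>j<r. mult_pow scale (- fst (hs j)) (- snd (hs j)) (cs j) e v)"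
    using ope unfolding is_ope_def by (simp add: fun_eq_iff)
  define H where "H j = mult_pow scale (- fst (hs j)) 0 (cs j)" for j
  have "mult_pow scale (- fst (hs j)) (- snd (hs j)) (cs j) = mult_pow scale 0 (- snd (hs j)) (H j)"
    if "j < r" for j
    unfolding H_def using w_bounded_field[OF fields[OF that]] by (rule mult_pow_eq_antiholo_holo)
  then have "a = (\<lambda>e v. \<Sum>j<r. mult_pow scale 0 (- snd (hs j)) (H j) e v)"
    unfolding a by (intro ext sum.cong) simp_all
  with indep have indep_H: "indep_zbar (\<lambda>e v. \<Sum>j<r. mult_pow scale 0 (- snd (hs j)) (H j) e v)"
    by simp
  have "w_bounded (H j)" if "j < r" for j
    unfolding H_def by (rule w_bounded_mult_pow[OF w_bounded_field[OF fields[OF that]]])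
  moreover have "bar_bounded (H j)" if "j < r" for j
    unfolding H_def by (rule bar_bounded_mult_pow_holo[OF bar_bounded_field[OF fields[OF that]]])
  ultimately have "H i = (\<lambda>e v. 0)"
    using indep_H incongruent i nonintegral by (rule indep_zbar_nonintegral_antiholo_vanishes)
  then have "cs i = (\<lambda>e v. 0)"
    unfolding H_def by (rule mult_pow_holo_eq_zero_imp[OF w_bounded_field[OF fields[OF i]]])
  with nonzero show False by contradiction
qed

end

lemma Kcheck_Ints_diff_iff:
  assumes "p \<in> Kcheck" and "q \<in> Kcheck"
  shows "fst p - fst q \<in> \<int> \<longleftrightarrow> snd p - snd q \<in> \<int>"
proof -
  have d: "fst p - snd p \<in> \<int>" "fst q - snd q \<in> \<int>"
    using assms unfolding Kcheck_def by (auto simp: case_prod_beta)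
  have "fst p - fst q = (snd p - snd q) + ((fst p - snd p) - (fst q - snd q))"
    "snd p - snd q = (fst p - fst q) - ((fst p - snd p) - (fst q - snd q))"
    by (simp_all add: algebra_simps)
  then show ?thesis using d by (metis Ints_add Ints_diff)
qed

theorem mainTheorem10:
  fixes scale :: "'k::field_char_0 \<Rightarrow> 'v::ab_group_add \<Rightarrow> 'v"
    and a :: "('k, 'v) dist"
    and r :: nat and hs :: "nat \<Rightarrow> 'k \<times> 'k" and cs :: "nat \<Rightarrow> ('k, 'v) dist"
  assumes "vector_space scale"
    and "end_dist scale a"
    and "indep_zbar a"
    and "ope_finite scale a"
    and "reduced_ope scale a r hs cs"
    and "\<forall>i<r. hs i \<in> Kcheck"
  shows "r \<le> 1 \<and> (r = 1 \<longrightarrow> fst (hs 0) \<in> \<int> \<and> snd (hs 0) = 0)"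
proof -
  interpret char0_vector_space scale by (rule char0_vector_space.intro) fact
  have ope: "is_ope scale a r hs cs" and nonzero: "\<And>i. i < r \<Longrightarrow> cs i \<noteq> (\<lambda>e v. 0)"
    and incongruent: "\<And>i j. i < r \<Longrightarrow> j < r \<Longrightarrow> i \<noteq> j \<Longrightarrow>
      \<not> (fst (hs i) - fst (hs j) \<in> \<int> \<and> snd (hs i) - snd (hs j) \<in> \<int>)"
    and irreducible: "\<forall>i<r. \<forall>n nb :: nat. (n, nb) \<noteq> (0, 0) \<longrightarrow>
      \<not> is_field scale (mult_pow scale (- of_nat n) (- of_nat nb) (cs i))"
    using assms(5) unfolding reduced_ope_def by simp_all
  have incongruent_bar: "snd (hs i) - snd (hs j) \<notin> \<int>" if "i < r" "j < r" "i \<noteq> j" for i j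
    using incongruent[OF that] Kcheck_Ints_diff_iff assms(6) that by blast
  have integral: "snd (hs i) \<in> \<int>" if "i < r" for i
    using ope assms(3) nonzero[OF that] that
    by (rule ope_antiholo_order_integral) (simp add: incongruent_bar that)
  have "r \<le> 1"
  proof (rule ccontr)
    assume "\<not> r \<le> 1"
    then have "0 < r" "1 < r" by simp_all
    then show False using incongruent_bar[of 0 1] Ints_diff[OF integral integral] by simp
  qed
  moreover have "snd (hs 0) = 0 \<and> fst (hs 0) \<in> \<int>" if "r = 1"
  proof -
    have "a = mult_pow scale (- fst (hs 0)) (- snd (hs 0)) (cs 0)"
      using ope that unfolding is_ope_def by (simp add: fun_eq_iff)
    then have "snd (hs 0) = 0"
      using ope that assms(3) nonzero integral irreducible[rule_format, of 0 0] unfolding is_ope_def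
      by (intro indep_zbar_integral_antiholo_order_zero[where h="- fst (hs 0)"]) simp_all
    moreover have "fst (hs 0) - snd (hs 0) \<in> \<int>"
      using assms(6) that unfolding Kcheck_def by (auto simp: case_prod_beta)
    ultimately show ?thesis by simp
  qed
  ultimately show ?thesis by blast
qed

end
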